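(* Let $k\geq1$ and let $w,\bar w\in\widetilde W_n$ both be increasing up to $k$ and have the same $k$-truncated A-code, with $\ell(w)=\ell(\bar w)+1$. Suppose that $v(\bar w)=s_iv(w)$ for some simple reflection $s_i$, $i\in\{\Box,1,2,\ldots\}$. Then $\bar w=s_iw$.
   Context: For $n\geq2$, $\widetilde W_n$ is the group of signed permutations $w=(w_1,\ldots,w_n)$ of $\{1,\ldots,n\}$ with an even number of negative entries; $\ell(w)=\#\{i<j\mid w_i>w_j\}+\sum_{w_i<0}(|w_i|-1)$. Left multiplication: for $i\geq1$, $s_iw$ interchanges the values $i,i+1$ (and $-i,-(i+1)$) in $w$; $s_\Box w$ replaces the values $1,2,-1,-2$ by $-2,-1,2,1$ respectively. $w$ is increasing up to $k$ if $|w_1|<w_2<\cdots<w_k$ (vacuous for $k=1$). The A-code is $\gamma_i:=\#\{j>i\mid w_j<w_i\}$ (for $w_1<-1$ the paper uses the A-code of the element obtained by changing the signs of $w_1$ and of the entry $\pm1$; this does not affect entries $\gamma_i$ with $i>k$), and the $k$-truncated A-code is $(\gamma_{k+1},\ldots,\gamma_n)$. $v(w)$ is obtained from $w$ by rearranging $w_{k+1},\ldots,w_n$ in increasing order. *)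

theory Defs
  imports Main
begin

text \<open>Signed permutations are lists of integers of length n; position i (1-based in
the paper) is list index i-1.\<close>

definition signed_perm :: "nat \<Rightarrow> int list \<Rightarrow> bool" where
  "signed_perm n w \<longleftrightarrow> length w = n \<and> distinct (map abs w) \<and> set (map abs w) = {1..int n}"

definition typeD :: "nat \<Rightarrow> int list \<Rightarrow> bool" where
  "typeD n w \<longleftrightarrow> signed_perm n w \<and> even (length (filter (\<lambda>x. x < 0) w))"

definition ell :: "int list \<Rightarrow> nat" where
  "ell w = card {(i, j). i < j \<and> j < length w \<and> w ! i > w ! j}
           + sum_list (map (\<lambda>x. if x < 0 then nat (\<bar>x\<bar> - 1) else 0) w)"

datatype sref = Box | S nat

definition valid_sref :: "nat \<Rightarrow> sref \<Rightarrow> bool" where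
  "valid_sref n s = (case s of Box \<Rightarrow> True | S i \<Rightarrow> 1 \<le> i \<and> i < n)"

fun sval :: "sref \<Rightarrow> int \<Rightarrow> int" where
  "sval Box x = (if x = 1 then -2 else if x = 2 then -1 else if x = -1 then 2
                 else if x = -2 then 1 else x)"
| "sval (S i) x = (if x = int i then int i + 1 else if x = int i + 1 then int i
                 else if x = - int i then - (int i + 1) else if x = - (int i + 1) then - int i
                 else x)"

text \<open>Left multiplication by a simple reflection acts on the values.\<close>
definition lmult :: "sref \<Rightarrow> int list \<Rightarrow> int list" where
  "lmult s w = map (sval s) w"

definition incr_upto :: "nat \<Rightarrow> int list \<Rightarrow> bool" where
  "incr_upto k w \<longleftrightarrow> (2 \<le> k \<longrightarrow> \<bar>w ! 0\<bar> < w ! 1) \<and>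
     (\<forall>j. 1 \<le> j \<and> j + 1 < k \<longrightarrow> w ! j < w ! (j + 1))"

text \<open>A-code entry at (0-based) position i.\<close>
definition acode :: "int list \<Rightarrow> nat \<Rightarrow> nat" where
  "acode w i = card {j. i < j \<and> j < length w \<and> w ! j < w ! i}"

definition trunc_acode :: "nat \<Rightarrow> int list \<Rightarrow> nat list" where
  "trunc_acode k w = map (acode w) [k..<length w]"

definition vperm :: "nat \<Rightarrow> int list \<Rightarrow> int list" where
  "vperm k w = take k w @ sort (drop k w)"

end

theory Submission
  imports Defs
begin

text \<open>The equation for v already gives the first k entries of wb; for the remaining
ones the claim is a fact about Lehmer codes: a list of distinct numbers is recovered from
its increasing rearrangement and its A-code, because the first entry is the element of
rank gamma_1 (counted from 0) of the sorted list and the remaining entries are handled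
recursively. So if the sorted tails of the two elements correspond under the value map
of s and the truncated A-codes agree, the tails themselves correspond under that map.\<close>

lemma remove1_map_inj_on:
  assumes "inj_on f (insert a (set xs))"
  shows "remove1 (f a) (map f xs) = map f (remove1 a xs)"
  using assms by (induction xs) (auto simp: inj_on_def)

lemma strict_sorted_nth_length_filter_less:
  fixes xs :: "'a::linorder list"
  assumes "sorted_wrt (<) xs" "x \<in> set xs"
  shows "xs ! length (filter (\<lambda>y. y < x) xs) = x"
  using assms
proof (induction xs)
  case (Cons y ys)
  show ?case
  proof (cases "y = x")
    case True
    then have "filter (\<lambda>z. z < x) ys = []"
      using Cons.prems by (auto simp: filter_empty_conv)
    with True show ?thesis by simp
  next
    case False
    with Cons.prems have "x \<in> set ys" "y < x" by auto
    with Cons.IH Cons.prems show ?thesis by simp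
  qed
qed simp

lemma sort_nth_length_filter_less:
  fixes xs :: "'a::linorder list"
  assumes "distinct xs" "x \<in> set xs"
  shows "sort xs ! length (filter (\<lambda>y. y < x) xs) = x"
proof -
  have "length (filter (\<lambda>y. y < x) xs) = length (filter (\<lambda>y. y < x) (sort xs))"
    by (simp only: filter_sort length_sort)
  with assms show ?thesis
    using strict_sorted_nth_length_filter_less[of "sort xs" x] by (simp add: strict_sorted_iff)
qed

lemma acode_Cons_0: "acode (a # t) 0 = length (filter (\<lambda>y. y < a) t)"
proof -
  have "{j. 0 < j \<and> j < length (a # t) \<and> (a # t) ! j < (a # t) ! 0}
        = Suc ` {i. i < length t \<and> t ! i < a}"
    by (auto simp: image_iff gr0_conv_Suc)
  then show ?thesis
    unfolding acode_def length_filter_conv_card by (simp add: card_image)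
qed

lemma acode_Cons_Suc: "acode (a # t) (Suc i) = acode t i"
proof -
  have "{j. Suc i < j \<and> j < length (a # t) \<and> (a # t) ! j < (a # t) ! Suc i}
        = Suc ` {j. i < j \<and> j < length t \<and> t ! j < t ! i}"
    by (auto simp: image_iff Suc_less_eq2)
  then show ?thesis
    unfolding acode_def by (simp add: card_image)
qed

lemma acode_drop: "acode w (k + i) = acode (drop k w) i"
proof (induction k arbitrary: w)
  case (Suc k)
  show ?case
  proof (cases w)
    case Nil
    then show ?thesis by (simp add: acode_def)
  next
    case (Cons a t)
    then show ?thesis
      using Suc.IH[of t] by (simp add: acode_Cons_Suc)
  qed
qed simp

lemma trunc_acode_0_Cons:
  "trunc_acode 0 (a # t) = length (filter (\<lambda>y. y < a) t) # trunc_acode 0 t"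
  unfolding trunc_acode_def
  by (simp add: upt_conv_Cons acode_Cons_0 acode_Cons_Suc map_Suc_upt[symmetric] del: upt_Suc)

lemma trunc_acode_eq_trunc_acode_0_drop: "trunc_acode k w = trunc_acode 0 (drop k w)"
proof -
  have "[k..<length w] = map (\<lambda>i. k + i) [0..<length w - k]"
    by (rule nth_equalityI) auto
  then show ?thesis
    unfolding trunc_acode_def by (simp add: acode_drop)
qed

lemma eq_map_if_sort_and_acode_eq:
  fixes t u :: "int list"
  assumes "distinct u"
    and "trunc_acode 0 t = trunc_acode 0 u"
    and "sort u = map f (sort t)"
  shows "u = map f t"
  using assms
proof (induction t arbitrary: u)
  case Nil
  then show ?case by (simp add: trunc_acode_def)
next
  case (Cons a t)
  from Cons.prems(2) obtain b u' where u: "u = b # u'"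
    by (cases u) (auto simp: trunc_acode_def)
  define c where "c = length (filter (\<lambda>y. y < a) t)"
  have codes: "c = length (filter (\<lambda>y. y < b) u')" "trunc_acode 0 t = trunc_acode 0 u'"
    using Cons.prems(2) by (simp_all add: u trunc_acode_0_Cons c_def)
  have "distinct (map f (sort (a # t)))"
    using Cons.prems(1,3) by (metis distinct_sort)
  then have dist_t: "distinct (a # t)" and inj: "inj_on f (insert a (set t))"
    by (simp_all only: distinct_map distinct_sort set_sort list.set)
  have "sort (a # t) ! c = a"
    using sort_nth_length_filter_less[OF dist_t, of a] by (simp add: c_def del: sort_key_simps)
  moreover have "sort u ! c = b"
    using sort_nth_length_filter_less[OF Cons.prems(1), of b]
    by (simp add: codes(1) u del: sort_key_simps)
  moreover have "c < length (sort (a # t))"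
    unfolding c_def using length_filter_le[of _ t] by (simp add: le_imp_less_Suc)
  ultimately have b: "b = f a"
    using Cons.prems(3) by (metis nth_map)
  have "sort u' = remove1 (f a) (sort u)"
    by (simp add: u b)
  also have "\<dots> = remove1 (f a) (map f (sort (a # t)))"
    using Cons.prems(3) by (simp only:)
  also have "\<dots> = map f (remove1 a (sort (a # t)))"
    using inj by (intro remove1_map_inj_on) (simp del: sort_key_simps)
  also have "\<dots> = map f (sort t)"
    by simp
  finally have "u' = map f t"
    using Cons.IH Cons.prems(1) codes(2) u by simp
  with u b show ?case by simp
qed

theorem lemma12:
  fixes n k :: nat and w wb :: "int list" and s :: sref
  assumes "2 \<le> n" and "1 \<le> k" and "k \<le> n"
    and "typeD n w" and "typeD n wb"
    and "incr_upto k w" and "incr_upto k wb"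
    and "trunc_acode k w = trunc_acode k wb"
    and "ell w = ell wb + 1"
    and "valid_sref n s"
    and "vperm k wb = lmult s (vperm k w)"
  shows "wb = lmult s w"
proof -
  have len: "length w = n" "length wb = n" and "distinct (map abs wb)"
    using assms(4,5) unfolding typeD_def signed_perm_def by auto
  then have dist: "distinct (drop k wb)"
    by (simp add: distinct_map)
  have "take k wb @ sort (drop k wb) = map (sval s) (take k w) @ map (sval s) (sort (drop k w))"
    using assms(11) unfolding vperm_def lmult_def by simp
  moreover have "length (take k wb) = length (map (sval s) (take k w))"
    using len by simp
  ultimately have head: "take k wb = map (sval s) (take k w)"
    and tail: "sort (drop k wb) = map (sval s) (sort (drop k w))"
    by auto
  have "trunc_acode 0 (drop k w) = trunc_acode 0 (drop k wb)"
    using assms(8) by (simp only: trunc_acode_eq_trunc_acode_0_drop[of k])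
  then have "drop k wb = map (sval s) (drop k w)"
    using eq_map_if_sort_and_acode_eq[OF dist _ tail] by simp
  with head show ?thesis
    unfolding lmult_def by (metis append_take_drop_id map_append)
qed

end
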